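(* Let $\mathbb K$ be an algebraically closed field, let $n\ge 1$ and $\mu\ge 0$ be integers with $\mu<\lfloor n/2\rfloor$, and let $(a,b,c)\in\mathcal P^\mu_n$. Let $\epsilon$ be a new variable. Then there exists $(a_\epsilon,b_\epsilon,c_\epsilon)\in\mathbb K[\epsilon,t]^3$ such that, regarded as univariate polynomials in $t$ over $\mathbb K(\epsilon)$, the following hold: (i) $\gcd(a_\epsilon,b_\epsilon,c_\epsilon)=1$; (ii) $\max\{\deg_t a_\epsilon,\deg_t b_\epsilon,\deg_t c_\epsilon\}=n$; (iii) $\mu(a_\epsilon,b_\epsilon,c_\epsilon)=\mu(a,b,c)+1$ (the class being computed over the field $\mathbb K(\epsilon)$); (iv) $(a_\epsilon,b_\epsilon,c_\epsilon)|_{\epsilon=0}=(a,b,c)$.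
   Context: For a field $F$ and $a,b,c\in F[t]$, the syzygy module is $\mathrm{Syz}(a,b,c)=\{(A,B,C)\in F[t]^3: Aa+Bb+Cc=0\}$. The degree of a vector $(A,B,C)$ is $\deg(A,B,C)=\max\{\deg A,\deg B,\deg C\}$. The class of $(a,b,c)$ is $\mu(a,b,c)=\min\{\deg(A,B,C): (A,B,C)\in \mathrm{Syz}(a,b,c)\setminus\{0\}\}$. $\mathbb K[t]_n$ denotes polynomials of degree $\le n$; $\mathcal P_n\subset \mathbb K[t]_n^3$ is the set of triples $(a,b,c)$ with $c\neq 0$, $\gcd(a,b,c)=1$ and $\max\{\deg a,\deg b,\deg c\}=n$; and $\mathcal P^\mu_n=\{(a,b,c)\in\mathcal P_n:\mu(a,b,c)=\mu\}$. *)

theory Defs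
  imports "HOL-Computational_Algebra.Polynomial" "HOL-Computational_Algebra.Fraction_Field"
begin

definition gcd3_one :: "'a::comm_semiring_1 \<Rightarrow> 'a \<Rightarrow> 'a \<Rightarrow> bool" where
  "gcd3_one a b c \<longleftrightarrow> (\<forall>d. d dvd a \<and> d dvd b \<and> d dvd c \<longrightarrow> d dvd 1)"

definition deg3 :: "'a::zero poly \<Rightarrow> 'a poly \<Rightarrow> 'a poly \<Rightarrow> nat" where
  "deg3 A B C = max (degree A) (max (degree B) (degree C))"

definition syz :: "'a::field poly \<Rightarrow> 'a poly \<Rightarrow> 'a poly \<Rightarrow> ('a poly \<times> 'a poly \<times> 'a poly) set" where
  "syz a b c = {(A, B, C). A * a + B * b + C * c = 0}"

definition syz_class :: "'a::field poly \<Rightarrow> 'a poly \<Rightarrow> 'a poly \<Rightarrow> nat" where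
  "syz_class a b c = (LEAST d. \<exists>A B C. (A, B, C) \<in> syz a b c \<and> (A, B, C) \<noteq> (0, 0, 0) \<and> deg3 A B C = d)"

definition Pn :: "nat \<Rightarrow> ('a::field poly \<times> 'a poly \<times> 'a poly) set" where
  "Pn n = {(a, b, c). c \<noteq> 0 \<and> gcd3_one a b c \<and> deg3 a b c = n}"

definition Pmu :: "nat \<Rightarrow> nat \<Rightarrow> ('a::field poly \<times> 'a poly \<times> 'a poly) set" where
  "Pmu mu n = {(a, b, c) \<in> Pn n. syz_class a b c = mu}"

(* elements of K[eps,t] are represented as 'a poly poly: polynomials in t whose
   coefficients are polynomials in eps *)
definition to_Keps :: "'a::field poly poly \<Rightarrow> 'a poly fract poly" where
  "to_Keps P = map_poly (\<lambda>q. Fract q 1) P"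

definition eval_eps0 :: "'a::field poly poly \<Rightarrow> 'a poly" where
  "eval_eps0 P = map_poly (\<lambda>q. poly q 0) P"

end

(*
  A syzygy L = (p, q, r) of V = (a, b, c) of minimal degree mu is coprime, so V = L x W for some
  W, and subtracting polynomial multiples of L from W one may assume deg W <= n - mu.  Let k be the
  coefficient vector of W in degree n - mu, and put L' = L + eps t^(mu+1) k and V' = L' x W.  Then
  V' specializes to V at eps = 0, and deg V' = n because the top coefficient k x k of the eps-part
  vanishes.  V' and L' stay coprime over K(eps): a common divisor, rescaled so that it specializes
  to a nonzero polynomial, specializes to a common divisor of coprime polynomials and cannot lose
  degree doing so.  Finally a coprime syzygy L' of a coprime V' with 2 deg L' <= deg V' is minimal:
  for any syzygy S the cross product S x L' is a multiple of V' of degree < deg V', hence zero,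
  so S is a multiple of L'.  Thus the class of V' is mu + 1.

  The argument works over any field and does not use the hypothesis n >= 1.
*)

theory Submission
  imports Defs "HOL-Computational_Algebra.Polynomial_Factorial"
begin

section \<open>Syzygies of coprime triples\<close>

lemma coeff_mult_degree_bound_sum:
  fixes p q :: "'a::comm_semiring_1 poly"
  assumes "degree p \<le> i" "degree q \<le> j"
  shows "coeff (p * q) (i + j) = coeff p i * coeff q j"
proof -
  have "coeff (p * q) (i + j) = (\<Sum>k\<le>i + j. if k = i then coeff p i * coeff q j else 0)"
    unfolding coeff_mult
  proof (rule sum.cong)
    fix k assume "k \<in> {..i + j}"
    then show "coeff p k * coeff q (i + j - k) = (if k = i then coeff p i * coeff q j else 0)"
      using assms by (cases k i rule: linorder_cases) (auto simp: coeff_eq_0)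
  qed simp
  then show ?thesis by simp
qed

lemma degree_mult_diff_le:
  fixes x y x' y' :: "'a::comm_ring_1 poly"
  assumes "degree x \<le> i" "degree y \<le> j" "degree x' \<le> i" "degree y' \<le> j"
  shows "degree (x * y - x' * y') \<le> i + j"
  using assms degree_mult_le[of x y] degree_mult_le[of x' y'] degree_diff_le by (metis add_mono order.trans)

lemma degree_diff_monom_mult_less:
  fixes X x :: "'a::comm_ring_1 poly"
  assumes "degree X \<le> D" "degree x \<le> m" "m \<le> D" "0 < D" "coeff X D = g * coeff x m"
  shows "degree (X - monom g (D - m) * x) < D"
proof -
  have "coeff (X - monom g (D - m) * x) i = 0" if "D - 1 < i" for i
  proof (cases "i = D")
    case True
    then show ?thesis using assms(3,5) by (simp add: coeff_monom_mult)
  next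
    case False
    then show ?thesis using that assms(1-3) by (simp add: coeff_monom_mult coeff_eq_0)
  qed
  then have "degree (X - monom g (D - m) * x) \<le> D - 1" by (rule degree_le[rule_format])
  then show ?thesis using assms(4) by simp
qed

lemma cross_eq_zero_imp_parallel:
  fixes x1 x2 x3 y1 y2 y3 z1 z2 z3 :: "'a::comm_ring_1"
  assumes "x2 * y3 = x3 * y2" "x3 * y1 = x1 * y3" "x1 * y2 = x2 * y1"
    and "z1 * y1 + z2 * y2 + z3 * y3 = 1"
  shows "x1 = (z1 * x1 + z2 * x2 + z3 * x3) * y1" "x2 = (z1 * x1 + z2 * x2 + z3 * x3) * y2"
    "x3 = (z1 * x1 + z2 * x2 + z3 * x3) * y3"
proof -
  have component: "x = (z * x + z' * x' + z'' * x'') * y"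
    if "x * y' = x' * y" "x * y'' = x'' * y" "z * y + z' * y' + z'' * y'' = 1"
    for x x' x'' y y' y'' z z' z'' :: 'a
  proof -
    have "x = x * (z * y + z' * y' + z'' * y'')" using that(3) by simp
    also have "\<dots> = z * x * y + z' * (x * y') + z'' * (x * y'')" by (simp add: algebra_simps)
    also have "\<dots> = (z * x + z' * x' + z'' * x'') * y" unfolding that(1,2) by (simp add: algebra_simps)
    finally show ?thesis .
  qed
  show "x1 = (z1 * x1 + z2 * x2 + z3 * x3) * y1"
    using assms(4) by (rule component[OF assms(3) assms(2)[symmetric]])
  show "x2 = (z1 * x1 + z2 * x2 + z3 * x3) * y2"
    using component[of x2 y3 x3 y2 y1 x1 z2 z3 z1] assms by (simp add: algebra_simps)
  show "x3 = (z1 * x1 + z2 * x2 + z3 * x3) * y3"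
    using component[of x3 y1 x1 y3 y2 x2 z3 z1 z2] assms by (simp add: algebra_simps)
qed

lemma parallel_of_cross_eq_zero:
  fixes x1 x2 x3 y1 y2 y3 :: "'a::field"
  assumes "y2 * x3 = y3 * x2" "y3 * x1 = y1 * x3" "y1 * x2 = y2 * x1" "(y1, y2, y3) \<noteq> (0, 0, 0)"
  obtains g where "x1 = g * y1" "x2 = g * y2" "x3 = g * y3"
proof -
  obtain z1 z2 z3 where "z1 * y1 + z2 * y2 + z3 * y3 = 1"
  proof -
    consider "y1 \<noteq> 0" | "y2 \<noteq> 0" | "y3 \<noteq> 0" using assms(4) by auto
    then show ?thesis
    proof cases
      case 1 then show ?thesis using that[of "inverse y1" 0 0] by simp
    next
      case 2 then show ?thesis using that[of 0 "inverse y2" 0] by simp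
    next
      case 3 then show ?thesis using that[of 0 0 "inverse y3"] by simp
    qed
  qed
  moreover have "x2 * y3 = x3 * y2" "x3 * y1 = x1 * y3" "x1 * y2 = x2 * y1"
    using assms(1-3) by (simp_all add: mult.commute)
  ultimately show ?thesis using cross_eq_zero_imp_parallel[of x2 y3 x3 y2 y1 x1] that by blast
qed

lemma separating_functional_of_cross_nonzero:
  fixes k1 k2 k3 l1 l2 l3 :: "'a::comm_ring_1"
  assumes "(l2 * k3 - l3 * k2, l3 * k1 - l1 * k3, l1 * k2 - l2 * k1) \<noteq> (0, 0, 0)"
  obtains y1 y2 y3 where "y1 * k1 + y2 * k2 + y3 * k3 = 0" "y1 * l1 + y2 * l2 + y3 * l3 \<noteq> 0"
proof -
  consider "l2 * k3 - l3 * k2 \<noteq> 0" | "l3 * k1 - l1 * k3 \<noteq> 0" | "l1 * k2 - l2 * k1 \<noteq> 0"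
    using assms by auto
  then show ?thesis
  proof cases
    case 1 then show ?thesis using that[of 0 k3 "- k2"] by (simp add: algebra_simps)
  next
    case 2 then show ?thesis using that[of "- k3" 0 k1] by (simp add: algebra_simps)
  next
    case 3 then show ?thesis using that[of k2 "- k1" 0] by (simp add: algebra_simps)
  qed
qed

text \<open>Triples are handled componentwise: the three equations below say
  \<open>(a, b, c) = (p, q, r) \<times> (A, B, C)\<close> (cross product).\<close>

lemma syzygy_cross_factor:
  fixes a b c p q r x y z :: "'a::comm_ring_1"
  assumes "p * a + q * b + r * c = 0" "x * p + y * q + z * r = 1"
  obtains A B C where "q * C - r * B = a" "r * A - p * C = b" "p * B - q * A = c"
proof
  have "q * (a * y - b * x) - r * (c * x - a * z) = a * (x * p + y * q + z * r) - x * (p * a + q * b + r * c)"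
    by (simp add: algebra_simps)
  then show "q * (a * y - b * x) - r * (c * x - a * z) = a" using assms by simp
  have "r * (b * z - c * y) - p * (a * y - b * x) = b * (x * p + y * q + z * r) - y * (p * a + q * b + r * c)"
    by (simp add: algebra_simps)
  then show "r * (b * z - c * y) - p * (a * y - b * x) = b" using assms by simp
  have "p * (c * x - a * z) - q * (b * z - c * y) = c * (x * p + y * q + z * r) - z * (p * a + q * b + r * c)"
    by (simp add: algebra_simps)
  then show "p * (c * x - a * z) - q * (b * z - c * y) = c" using assms by simp
qed

lemma gcd3_one_nonzero: "gcd3_one a b c \<Longrightarrow> (a, b, c) \<noteq> (0, 0, 0)"
  unfolding gcd3_one_def by (auto dest: spec[of _ 0] simp: dvd_def)

lemma gcd3_one_imp_bezout:
  fixes a b c :: "'a::euclidean_ring"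
  assumes "gcd3_one a b c"
  obtains x y z where "x * a + y * b + z * c = 1"
proof -
  define I where "I = {x * a + y * b + z * c | x y z. True}"
  have I_diff: "u - k * v \<in> I" if "u \<in> I" "v \<in> I" for u v k
  proof -
    from that obtain x y z x' y' z' where "u = x * a + y * b + z * c" "v = x' * a + y' * b + z' * c"
      unfolding I_def by blast
    then have "u - k * v = (x - k * x') * a + (y - k * y') * b + (z - k * z') * c"
      by (simp add: algebra_simps)
    then show ?thesis unfolding I_def by blast
  qed
  have "a = 1 * a + 0 * b + 0 * c" "b = 0 * a + 1 * b + 0 * c" "c = 0 * a + 0 * b + 1 * c"
    by simp_all
  then have I_gens: "a \<in> I" "b \<in> I" "c \<in> I" unfolding I_def by blast+
  have I_0: "0 \<in> I" using I_diff[OF I_gens(1) I_gens(1), of 1] by simp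
  from gcd3_one_nonzero[OF assms] obtain g0 where "g0 \<in> I" "g0 \<noteq> 0" using I_gens by blast
  with ex_has_least_nat[of "\<lambda>g. g \<in> I \<and> g \<noteq> 0" g0 euclidean_size]
  obtain g where g: "g \<in> I" "g \<noteq> 0"
    and g_min: "\<And>h. h \<in> I \<Longrightarrow> h \<noteq> 0 \<Longrightarrow> euclidean_size g \<le> euclidean_size h"
    by blast
  have g_dvd: "g dvd u" if "u \<in> I" for u
  proof (rule ccontr)
    assume "\<not> g dvd u"
    moreover have "u mod g \<in> I"
      using I_diff[OF that g(1), of "u div g"] by (simp add: minus_div_mult_eq_mod)
    ultimately show False
      using g_min[of "u mod g"] mod_size_less[OF g(2), of u] by (auto simp: mod_eq_0_iff_dvd)
  qed
  have "g dvd 1"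
    using assms g_dvd[OF I_gens(1)] g_dvd[OF I_gens(2)] g_dvd[OF I_gens(3)]
    unfolding gcd3_one_def by blast
  then obtain k where "1 = g * k" by (rule dvdE)
  then have "1 \<in> I" using I_diff[OF I_0 g(1), of "- k"] by (simp add: mult.commute)
  then show ?thesis using that unfolding I_def by (auto dest: sym)
qed

lemma deg3_mult:
  fixes d x y z :: "'a::idom poly"
  assumes "d \<noteq> 0" "(x, y, z) \<noteq> (0, 0, 0)"
  shows "deg3 (d * x) (d * y) (d * z) = degree d + deg3 x y z"
proof -
  have "degree (d * u) = (if u = 0 then 0 else degree d + degree u)" for u
    using assms(1) by (simp add: degree_mult_eq)
  then show ?thesis using assms(2) unfolding deg3_def by (auto simp: max_def)
qed

lemma deg3_coeff_nonzero:
  fixes p q r :: "'a::zero poly"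
  assumes "(p, q, r) \<noteq> (0, 0, 0)"
  shows "(coeff p (deg3 p q r), coeff q (deg3 p q r), coeff r (deg3 p q r)) \<noteq> (0, 0, 0)"
  using assms by (auto simp: deg3_def max_def) (metis leading_coeff_0_iff)+

lemma syz_nonzero_exists: "\<exists>A B C. (A, B, C) \<in> syz a b c \<and> (A, B, C) \<noteq> (0, 0, 0)"
proof (cases "a = 0")
  case True
  then show ?thesis unfolding syz_def by (intro exI[of _ 1] exI[of _ 0]) simp
next
  case False
  then show ?thesis unfolding syz_def by (intro exI[of _ b] exI[of _ "- a"] exI[of _ 0]) simp
qed

lemma syz_class_le:
  "(A, B, C) \<in> syz a b c \<Longrightarrow> (A, B, C) \<noteq> (0, 0, 0) \<Longrightarrow> syz_class a b c \<le> deg3 A B C"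
  unfolding syz_class_def by (rule Least_le) blast

lemma syz_class_attained:
  obtains A B C where "(A, B, C) \<in> syz a b c" "(A, B, C) \<noteq> (0, 0, 0)" "deg3 A B C = syz_class a b c"
proof -
  have "\<exists>d A B C. (A, B, C) \<in> syz a b c \<and> (A, B, C) \<noteq> (0, 0, 0) \<and> deg3 A B C = d"
    using syz_nonzero_exists by blast
  from LeastI_ex[OF this] show ?thesis using that unfolding syz_class_def by blast
qed

lemma gcd3_one_minimal_syzygy:
  fixes a b c p q r :: "'a::field poly"
  assumes "(p, q, r) \<in> syz a b c" "(p, q, r) \<noteq> (0, 0, 0)" "deg3 p q r = syz_class a b c"
  shows "gcd3_one p q r"
  unfolding gcd3_one_def
proof (intro allI impI)
  fix d assume "d dvd p \<and> d dvd q \<and> d dvd r"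
  then obtain p' q' r' where pqr: "p = d * p'" "q = d * q'" "r = d * r'" by (meson dvdE)
  have "d \<noteq> 0" and nz: "(p', q', r') \<noteq> (0, 0, 0)" using assms(2) pqr by auto
  have "d * (p' * a + q' * b + r' * c) = 0" using assms(1) pqr by (simp add: syz_def algebra_simps)
  then have "(p', q', r') \<in> syz a b c" using \<open>d \<noteq> 0\<close> by (simp add: syz_def)
  then have "deg3 p q r \<le> deg3 p' q' r'" using assms(3) syz_class_le nz by metis
  then have "degree d = 0" using deg3_mult[OF \<open>d \<noteq> 0\<close> nz] pqr by simp
  then show "d dvd 1" using \<open>d \<noteq> 0\<close> is_unit_iff_degree by blast
qed

text \<open>If \<open>deg W > n - m\<close>, the top coefficient of \<open>L \<times> W\<close> vanishes, so the leading
  coefficient vector of \<open>W\<close> is a multiple \<open>g\<close> of that of \<open>L\<close>, and \<open>W - g t\<^sup>D\<^sup>-\<^sup>m L\<close> has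
  smaller degree and the same cross product with \<open>L\<close>.\<close>

lemma cross_factor_degree_step:
  fixes p q r a b c A B C :: "'a::field poly"
  assumes L: "deg3 p q r = m" "(p, q, r) \<noteq> (0, 0, 0)"
    and V: "deg3 a b c \<le> n" and W: "n - m < deg3 A B C" "m \<le> n - m"
    and cross: "q * C - r * B = a" "r * A - p * C = b" "p * B - q * A = c"
  obtains A' B' C' where "q * C' - r * B' = a" "r * A' - p * C' = b" "p * B' - q * A' = c"
    "deg3 A' B' C' < deg3 A B C"
proof -
  define D where "D = deg3 A B C"
  have dp: "degree p \<le> m" "degree q \<le> m" "degree r \<le> m" using L(1) by (auto simp: deg3_def)
  have dA: "degree A \<le> D" "degree B \<le> D" "degree C \<le> D" by (auto simp: D_def deg3_def)
  have "coeff a (m + D) = 0" "coeff b (m + D) = 0" "coeff c (m + D) = 0"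
    using V W unfolding D_def by (auto simp: deg3_def coeff_eq_0)
  then have "coeff q m * coeff C D = coeff r m * coeff B D"
      "coeff r m * coeff A D = coeff p m * coeff C D"
      "coeff p m * coeff B D = coeff q m * coeff A D"
    using dp dA by (simp_all add: coeff_mult_degree_bound_sum flip: cross)
  moreover have "(coeff p m, coeff q m, coeff r m) \<noteq> (0, 0, 0)"
    using deg3_coeff_nonzero[OF L(2)] L(1) by simp
  ultimately obtain g where g: "coeff A D = g * coeff p m" "coeff B D = g * coeff q m"
      "coeff C D = g * coeff r m"
    by (rule parallel_of_cross_eq_zero)
  have "m \<le> D" "0 < D" using W unfolding D_def by auto
  then have "degree (A - monom g (D - m) * p) < D" "degree (B - monom g (D - m) * q) < D"
      "degree (C - monom g (D - m) * r) < D"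
    using dA dp g by (simp_all add: degree_diff_monom_mult_less)
  then have "deg3 (A - monom g (D - m) * p) (B - monom g (D - m) * q) (C - monom g (D - m) * r) < D"
    by (simp add: deg3_def)
  moreover have "q * (C - monom g (D - m) * r) - r * (B - monom g (D - m) * q) = a"
      "r * (A - monom g (D - m) * p) - p * (C - monom g (D - m) * r) = b"
      "p * (B - monom g (D - m) * q) - q * (A - monom g (D - m) * p) = c"
    using cross by (simp_all add: algebra_simps)
  ultimately show ?thesis using that unfolding D_def by blast
qed

lemma cross_factor_degree_reduction:
  fixes p q r a b c A B C :: "'a::field poly"
  assumes "deg3 p q r = m" "(p, q, r) \<noteq> (0, 0, 0)" "deg3 a b c \<le> n" "2 * m \<le> n"
    and "q * C - r * B = a" "r * A - p * C = b" "p * B - q * A = c"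
  shows "\<exists>P Q R. q * R - r * Q = a \<and> r * P - p * R = b \<and> p * Q - q * P = c \<and> deg3 P Q R \<le> n - m"
  using assms(5-7)
proof (induction "deg3 A B C" arbitrary: A B C rule: less_induct)
  case less
  show ?case
  proof (cases "deg3 A B C \<le> n - m")
    case True
    with less.prems show ?thesis by blast
  next
    case False
    with assms(1-4) less.prems obtain A' B' C' where "q * C' - r * B' = a" "r * A' - p * C' = b"
        "p * B' - q * A' = c" "deg3 A' B' C' < deg3 A B C"
      by (elim cross_factor_degree_step) auto
    with less.hyps show ?thesis by blast
  qed
qed

lemma syzygy_cross_factor_low_degree:
  fixes p q r a b c :: "'a::field poly"
  assumes "(p, q, r) \<in> syz a b c" "gcd3_one p q r" "deg3 p q r = mu" "deg3 a b c \<le> n" "2 * mu \<le> n"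
  obtains P Q R where "q * R - r * Q = a" "r * P - p * R = b" "p * Q - q * P = c"
    "deg3 P Q R \<le> n - mu"
proof -
  have syzygy: "p * a + q * b + r * c = 0" using assms(1) by (simp add: syz_def)
  obtain x y z where "x * p + y * q + z * r = 1" using gcd3_one_imp_bezout[OF assms(2)] .
  with syzygy obtain A B C where "q * C - r * B = a" "r * A - p * C = b" "p * B - q * A = c"
    by (rule syzygy_cross_factor)
  from cross_factor_degree_reduction[OF assms(3) gcd3_one_nonzero[OF assms(2)] assms(4,5) this]
  show ?thesis using that by blast
qed

text \<open>Both \<open>S\<close> and \<open>L\<close> are orthogonal to \<open>V\<close>, so \<open>S \<times> L\<close> is a multiple of \<open>V\<close>; its degree
  is too small for that unless \<open>S \<times> L = 0\<close>, and then \<open>S\<close> is a multiple of \<open>L\<close>.\<close>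

lemma syzygy_degree_lower_bound:
  fixes S1 S2 S3 L1 L2 L3 V1 V2 V3 :: "'a::field poly"
  assumes S: "(S1, S2, S3) \<in> syz V1 V2 V3" "(S1, S2, S3) \<noteq> (0, 0, 0)"
    and L: "(L1, L2, L3) \<in> syz V1 V2 V3" "gcd3_one L1 L2 L3"
    and V: "gcd3_one V1 V2 V3"
    and deg: "deg3 S1 S2 S3 + deg3 L1 L2 L3 < deg3 V1 V2 V3"
  shows "deg3 L1 L2 L3 \<le> deg3 S1 S2 S3"
proof -
  define X1 X2 X3 where "X1 = S2 * L3 - S3 * L2" "X2 = S3 * L1 - S1 * L3" "X3 = S1 * L2 - S2 * L1"
  obtain w1 w2 w3 where w: "w1 * V1 + w2 * V2 + w3 * V3 = 1" using gcd3_one_imp_bezout[OF V] .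
  obtain z1 z2 z3 where z: "z1 * L1 + z2 * L2 + z3 * L3 = 1" using gcd3_one_imp_bezout[OF L(2)] .
  have SV: "S1 * V1 + S2 * V2 + S3 * V3 = 0" and LV: "L1 * V1 + L2 * V2 + L3 * V3 = 0"
    using S(1) L(1) by (simp_all add: syz_def)
  have "X2 * V3 - X3 * V2 = L1 * (S1 * V1 + S2 * V2 + S3 * V3) - S1 * (L1 * V1 + L2 * V2 + L3 * V3)"
    "X3 * V1 - X1 * V3 = L2 * (S1 * V1 + S2 * V2 + S3 * V3) - S2 * (L1 * V1 + L2 * V2 + L3 * V3)"
    "X1 * V2 - X2 * V1 = L3 * (S1 * V1 + S2 * V2 + S3 * V3) - S3 * (L1 * V1 + L2 * V2 + L3 * V3)"
    unfolding X1_X2_X3_def by (simp_all add: algebra_simps)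
  then have "X2 * V3 = X3 * V2" "X3 * V1 = X1 * V3" "X1 * V2 = X2 * V1" using SV LV by simp_all
  from cross_eq_zero_imp_parallel[OF this w]
  obtain g where X: "X1 = g * V1" "X2 = g * V2" "X3 = g * V3" by blast
  have dS: "degree S1 \<le> deg3 S1 S2 S3" "degree S2 \<le> deg3 S1 S2 S3" "degree S3 \<le> deg3 S1 S2 S3"
    and dL: "degree L1 \<le> deg3 L1 L2 L3" "degree L2 \<le> deg3 L1 L2 L3" "degree L3 \<le> deg3 L1 L2 L3"
    by (simp_all add: deg3_def)
  have "deg3 X1 X2 X3 \<le> deg3 S1 S2 S3 + deg3 L1 L2 L3"
    unfolding X1_X2_X3_def deg3_def using dS dL by (simp add: degree_mult_diff_le)
  moreover have "deg3 X1 X2 X3 = degree g + deg3 V1 V2 V3" if "g \<noteq> 0"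
    unfolding X using deg3_mult[OF that gcd3_one_nonzero[OF V]] .
  ultimately have "g = 0" using deg by fastforce
  then have "S2 * L3 = S3 * L2" "S3 * L1 = S1 * L3" "S1 * L2 = S2 * L1"
    using X unfolding X1_X2_X3_def by simp_all
  from cross_eq_zero_imp_parallel[OF this z]
  obtain h where "S1 = h * L1" "S2 = h * L2" "S3 = h * L3" by blast
  moreover have "h \<noteq> 0" using S(2) calculation by auto
  ultimately show ?thesis using deg3_mult[OF _ gcd3_one_nonzero[OF L(2)]] by simp
qed

lemma syz_class_coprime_syzygy:
  fixes L1 L2 L3 V1 V2 V3 :: "'a::field poly"
  assumes "(L1, L2, L3) \<in> syz V1 V2 V3" "gcd3_one L1 L2 L3" "gcd3_one V1 V2 V3"
    and "2 * deg3 L1 L2 L3 \<le> deg3 V1 V2 V3"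
  shows "syz_class V1 V2 V3 = deg3 L1 L2 L3"
proof (rule antisym)
  show "syz_class V1 V2 V3 \<le> deg3 L1 L2 L3"
    using assms(1) gcd3_one_nonzero[OF assms(2)] by (rule syz_class_le)
  obtain S1 S2 S3 where S: "(S1, S2, S3) \<in> syz V1 V2 V3" "(S1, S2, S3) \<noteq> (0, 0, 0)"
    "deg3 S1 S2 S3 = syz_class V1 V2 V3"
    by (rule syz_class_attained)
  show "deg3 L1 L2 L3 \<le> syz_class V1 V2 V3"
  proof (rule ccontr)
    assume less: "\<not> deg3 L1 L2 L3 \<le> syz_class V1 V2 V3"
    then have "deg3 S1 S2 S3 + deg3 L1 L2 L3 < deg3 V1 V2 V3" using S(3) assms(4) by linarith
    from syzygy_degree_lower_bound[OF S(1,2) assms(1-3) this] show False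
      using S(3) less by simp
  qed
qed

section \<open>Specialization at \<open>\<epsilon> = 0\<close>\<close>

lemma coeff_eval_eps0: "coeff (eval_eps0 P) i = poly (coeff P i) 0"
  unfolding eval_eps0_def by (simp add: coeff_map_poly)

lemma eval_eps0_0 [simp]: "eval_eps0 0 = 0"
  and eval_eps0_smult [simp]: "eval_eps0 (smult c P) = smult (poly c 0) (eval_eps0 P)"
  by (simp_all add: poly_eq_iff coeff_eval_eps0)

lemma eval_eps0_mult [simp]: "eval_eps0 (P * Q) = eval_eps0 P * eval_eps0 Q"
  by (simp add: poly_eq_iff coeff_eval_eps0 coeff_mult poly_sum)

lemma degree_eval_eps0_le: "degree (eval_eps0 P) \<le> degree P"
  unfolding eval_eps0_def by (rule map_poly_degree_leq)

definition eps :: "'a::comm_semiring_1 poly" where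
  "eps = [:0, 1:]"

lemma poly_eps_0 [simp]: "poly eps 0 = 0"
  and eps_nonzero [simp]: "eps \<noteq> 0"
  and degree_eps [simp]: "degree eps = 1"
  by (simp_all add: eps_def)

lemma eps_dvd_iff: "eps dvd p \<longleftrightarrow> poly p 0 = (0 :: 'a::comm_ring_1)"
  using dvd_iff_poly_eq_0[of 0 p] by (simp add: eps_def)

lemma eps_power_decomposition:
  fixes f :: "'a::field poly poly"
  assumes "f \<noteq> 0"
  obtains k g where "f = smult (eps ^ k) g" "eval_eps0 g \<noteq> 0"
  using assms
proof (induction "degree (lead_coeff f)" arbitrary: f rule: less_induct)
  case less
  show ?case
  proof (cases "eval_eps0 f = 0")
    case False
    then show ?thesis using less.prems(1)[of 0 f] by simp
  next
    case True
    then have dvd: "eps dvd coeff f i" for i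
      using coeff_eval_eps0[of f i] by (simp add: eps_dvd_iff)
    define g where "g = map_poly (\<lambda>c. c div eps) f"
    have f: "f = smult eps g"
      by (intro poly_eqI) (simp add: g_def coeff_map_poly dvd)
    then have "g \<noteq> 0" using less.prems(2) by auto
    have "lead_coeff f = eps * lead_coeff g" using f by simp
    then have lt: "degree (lead_coeff g) < degree (lead_coeff f)"
      using \<open>g \<noteq> 0\<close> by (simp add: degree_mult_eq)
    show ?thesis
    proof (rule less.hyps[OF lt _ \<open>g \<noteq> 0\<close>])
      fix k h assume "g = smult (eps ^ k) h" "eval_eps0 h \<noteq> 0"
      then show ?thesis using less.prems(1)[of "Suc k" h] f by simp
    qed
  qed
qed

lemma eps_power_cancel:
  fixes X Y :: "'a::field poly poly"
  assumes "smult (eps ^ i) X = smult (eps ^ j) Y" "eval_eps0 X \<noteq> 0" "eval_eps0 Y \<noteq> 0"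
  shows "X = Y"
proof -
  have le: "X = Y" if "smult (eps ^ i) X = smult (eps ^ j) Y" "eval_eps0 X \<noteq> 0" "i \<le> j"
    for i j and X Y :: "'a poly poly"
  proof -
    have "smult (eps ^ i) X = smult (eps ^ i) (smult (eps ^ (j - i)) Y)"
      using that(1,3) by (simp flip: power_add)
    then have X: "X = smult (eps ^ (j - i)) Y" by (rule smult_cancel[rotated]) simp
    with that(2) have "j - i = 0" by (cases "j - i") (simp_all add: poly_power)
    with X show ?thesis by simp
  qed
  show ?thesis
    using le[OF assms(1,2)] le[OF assms(1)[symmetric] assms(3)] by (cases "i \<le> j") auto
qed

lemma fract_poly_clear_denominators:
  fixes q :: "'a::idom fract poly"
  obtains D r where "D \<noteq> 0" "smult (to_fract D) q = fract_poly r"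
proof -
  have "\<exists>D r. D \<noteq> 0 \<and> smult (to_fract D) q = fract_poly r"
  proof (induction q)
    case 0
    show ?case by (intro exI[of _ 1] exI[of _ 0]) simp
  next
    case (pCons x q)
    then obtain D r where D: "D \<noteq> 0" "smult (to_fract D) q = fract_poly r" by blast
    obtain u w where x: "x = Fract u w" "w \<noteq> 0" by (cases x) auto
    have "to_fract (w * D) * x = to_fract (u * D)"
      using x by (simp add: to_fract_def eq_fract)
    moreover have "smult (to_fract (w * D)) q = smult (to_fract w) (fract_poly r)"
      using D(2) by (simp del: smult_smult add: smult_smult[symmetric])
    ultimately have "smult (to_fract (w * D)) (pCons x q) = fract_poly (pCons (u * D) (smult w r))"
      by (simp add: map_poly_pCons)
    moreover have "w * D \<noteq> 0" using x D by simp
    ultimately show ?case by blast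
  qed
  then show ?thesis using that by blast
qed

lemma fract_poly_normal_form:
  fixes d :: "'a::field poly fract poly"
  assumes "d \<noteq> 0"
  obtains c e where "c \<noteq> 0" "d = smult c (fract_poly e)" "eval_eps0 e \<noteq> 0"
proof -
  obtain D r where D: "D \<noteq> 0" "smult (to_fract D) d = fract_poly r"
    by (rule fract_poly_clear_denominators)
  then have "r \<noteq> 0" using assms by auto
  then obtain k e where e: "r = smult (eps ^ k) e" "eval_eps0 e \<noteq> 0"
    by (rule eps_power_decomposition)
  have "d = smult (inverse (to_fract D)) (smult (to_fract D) d)" using D(1) by simp
  also have "\<dots> = smult (inverse (to_fract D) * to_fract (eps ^ k)) (fract_poly e)"
    using D(2) e(1) by simp
  finally show ?thesis
    using D(1) e(2) by (intro that[of "inverse (to_fract D) * to_fract (eps ^ k)" e]) simp_all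
qed

text \<open>Gauss's lemma for the local ring of \<open>K[\<epsilon>]\<close> at \<open>\<epsilon> = 0\<close>, by comparing
  \<open>\<epsilon>\<close>-adic valuations.\<close>

lemma fract_poly_dvd_local:
  fixes d P :: "'a::field poly poly"
  assumes "fract_poly d dvd fract_poly P" "eval_eps0 d \<noteq> 0" "eval_eps0 P \<noteq> 0"
  obtains u r where "poly u 0 \<noteq> 0" "smult u P = d * r"
proof -
  from assms(1) obtain q where q: "fract_poly P = fract_poly d * q" by (rule dvdE)
  obtain D s where D: "D \<noteq> 0" "smult (to_fract D) q = fract_poly s"
    by (rule fract_poly_clear_denominators)
  have "fract_poly (smult D P) = fract_poly d * smult (to_fract D) q"
    using q by simp
  then have "fract_poly (smult D P) = fract_poly (d * s)"
    using D(2) by simp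
  then have eq: "smult D P = d * s" by (simp only: fract_poly_eq_iff)
  then have "s \<noteq> 0" using D(1) assms(3) by auto
  then obtain k r where r: "s = smult (eps ^ k) r" "eval_eps0 r \<noteq> 0"
    by (rule eps_power_decomposition)
  obtain u where u: "D = eps ^ order 0 D * u" "\<not> eps dvd u"
    using order_decomp[OF D(1), of 0] by (auto simp: eps_def)
  have "poly u 0 \<noteq> 0" using u(2) by (simp add: eps_dvd_iff)
  have "smult (eps ^ order 0 D) (smult u P) = smult (eps ^ k) (d * r)"
    using eq u(1) r(1) by (metis mult_smult_right smult_smult)
  moreover have "eval_eps0 (smult u P) \<noteq> 0" "eval_eps0 (d * r) \<noteq> 0"
    using \<open>poly u 0 \<noteq> 0\<close> assms(2,3) r(2) by simp_all
  ultimately have "smult u P = d * r" by (rule eps_power_cancel)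
  with \<open>poly u 0 \<noteq> 0\<close> show ?thesis by (rule that)
qed

lemma eval_eps0_dvd_of_fract_poly_dvd:
  fixes d P :: "'a::field poly poly"
  assumes "fract_poly d dvd fract_poly P" "eval_eps0 d \<noteq> 0"
  shows "eval_eps0 d dvd eval_eps0 P"
proof (cases "eval_eps0 P = 0")
  case False
  with assms obtain u r where u: "poly u 0 \<noteq> 0" "smult u P = d * r"
    by (rule fract_poly_dvd_local)
  have "smult (poly u 0) (eval_eps0 P) = eval_eps0 d * eval_eps0 r"
    using arg_cong[OF u(2), of eval_eps0] by (simp only: eval_eps0_mult eval_eps0_smult)
  then have "eval_eps0 P = eval_eps0 d * smult (inverse (poly u 0)) (eval_eps0 r)"
    using u(1) by (metis mult_smult_right smult_smult left_inverse smult_1_left)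
  then show ?thesis by (rule dvdI)
qed simp

lemma degree_eval_eps0_of_fract_poly_dvd:
  fixes d P :: "'a::field poly poly"
  assumes "fract_poly d dvd fract_poly P" "eval_eps0 d \<noteq> 0"
    and "eval_eps0 P \<noteq> 0" "degree (eval_eps0 P) = degree P"
  shows "degree (eval_eps0 d) = degree d"
proof -
  from assms(1-3) obtain u r where u: "poly u 0 \<noteq> 0" "smult u P = d * r"
    by (rule fract_poly_dvd_local)
  have ev: "smult (poly u 0) (eval_eps0 P) = eval_eps0 d * eval_eps0 r"
    using arg_cong[OF u(2), of eval_eps0] by (simp only: eval_eps0_mult eval_eps0_smult)
  then have "eval_eps0 r \<noteq> 0" using u(1) assms(3) by auto
  then have "degree (eval_eps0 P) = degree (eval_eps0 d) + degree (eval_eps0 r)"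
    using arg_cong[OF ev, of degree] u(1) assms(2) by (simp add: degree_mult_eq)
  moreover have "u \<noteq> 0" "d \<noteq> 0" "r \<noteq> 0"
    using u(1) assms(2) \<open>eval_eps0 r \<noteq> 0\<close> by auto
  then have "degree P = degree d + degree r"
    using arg_cong[OF u(2), of degree] by (simp add: degree_mult_eq)
  ultimately show ?thesis
    using assms(4) degree_eval_eps0_le[of d] degree_eval_eps0_le[of r] by linarith
qed

lemma degree_fract_poly [simp]: "degree (fract_poly p) = degree p"
  by (rule degree_map_poly) simp

lemma deg3_fract_poly [simp]: "deg3 (fract_poly A) (fract_poly B) (fract_poly C) = deg3 A B C"
  by (simp add: deg3_def)

text \<open>A common divisor over \<open>K(\<epsilon>)\<close>, rescaled to specialize to a nonzero polynomial,
  specializes to a unit; the combination \<open>Q\<close>, whose degree survives specialization, keeps it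
  from losing degree on the way.\<close>

lemma gcd3_one_fract_poly_of_specialization:
  fixes P1 P2 P3 Q :: "'a::field poly poly"
  assumes "gcd3_one (eval_eps0 P1) (eval_eps0 P2) (eval_eps0 P3)"
    and Q: "Q = smult y1 P1 + smult y2 P2 + smult y3 P3"
    and "eval_eps0 Q \<noteq> 0" "degree (eval_eps0 Q) = degree Q"
  shows "gcd3_one (fract_poly P1) (fract_poly P2) (fract_poly P3)"
  unfolding gcd3_one_def
proof (intro allI impI)
  fix d assume d: "d dvd fract_poly P1 \<and> d dvd fract_poly P2 \<and> d dvd fract_poly P3"
  have "d dvd fract_poly Q" using d unfolding Q by (simp add: dvd_add dvd_smult)
  moreover have "Q \<noteq> 0" using assms(3) by auto
  ultimately have "d \<noteq> 0" by auto
  then obtain c e where e: "c \<noteq> 0" "d = smult c (fract_poly e)" "eval_eps0 e \<noteq> 0"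
    by (rule fract_poly_normal_form)
  have e_dvd: "fract_poly e dvd X" if "d dvd X" for X
    using that e(1,2) by (simp add: smult_dvd_iff)
  have "eval_eps0 e dvd 1"
    using assms(1) d e_dvd eval_eps0_dvd_of_fract_poly_dvd[OF _ e(3)] unfolding gcd3_one_def by blast
  moreover have "degree (eval_eps0 e) = degree e"
    using degree_eval_eps0_of_fract_poly_dvd[OF e_dvd e(3) assms(3,4)] \<open>d dvd fract_poly Q\<close> by blast
  ultimately have "degree d = 0" using e(1,2,3) by (simp add: is_unit_iff_degree)
  then show "d dvd 1" using \<open>d \<noteq> 0\<close> by (simp add: is_unit_iff_degree)
qed

lemma gcd3_one_fract_poly_of_deg3_specialization:
  fixes P1 P2 P3 :: "'a::field poly poly"
  assumes "gcd3_one (eval_eps0 P1) (eval_eps0 P2) (eval_eps0 P3)"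
    and "deg3 P1 P2 P3 \<le> deg3 (eval_eps0 P1) (eval_eps0 P2) (eval_eps0 P3)"
  shows "gcd3_one (fract_poly P1) (fract_poly P2) (fract_poly P3)"
proof -
  let ?N = "deg3 (eval_eps0 P1) (eval_eps0 P2) (eval_eps0 P3)"
  have exact: "eval_eps0 P \<noteq> 0 \<and> degree (eval_eps0 P) = degree P"
    if "coeff (eval_eps0 P) ?N \<noteq> 0" "degree P \<le> deg3 P1 P2 P3" for P
    using that assms(2) le_degree[OF that(1)] degree_eval_eps0_le[of P] by auto
  have "(coeff (eval_eps0 P1) ?N, coeff (eval_eps0 P2) ?N, coeff (eval_eps0 P3) ?N) \<noteq> (0, 0, 0)"
    using deg3_coeff_nonzero[OF gcd3_one_nonzero[OF assms(1)]] .
  then consider "coeff (eval_eps0 P1) ?N \<noteq> 0" | "coeff (eval_eps0 P2) ?N \<noteq> 0"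
    | "coeff (eval_eps0 P3) ?N \<noteq> 0"
    by auto
  then show ?thesis
  proof cases
    case 1
    with exact[of P1] have "eval_eps0 P1 \<noteq> 0" "degree (eval_eps0 P1) = degree P1"
      by (simp_all add: deg3_def)
    from gcd3_one_fract_poly_of_specialization[of P1 P2 P3 P1 1 0 0, OF assms(1) _ this] show ?thesis
      by simp
  next
    case 2
    with exact[of P2] have "eval_eps0 P2 \<noteq> 0" "degree (eval_eps0 P2) = degree P2"
      by (simp_all add: deg3_def)
    from gcd3_one_fract_poly_of_specialization[of P1 P2 P3 P2 0 1 0, OF assms(1) _ this] show ?thesis
      by simp
  next
    case 3
    with exact[of P3] have "eval_eps0 P3 \<noteq> 0" "degree (eval_eps0 P3) = degree P3"
      by (simp_all add: deg3_def)
    from gcd3_one_fract_poly_of_specialization[of P1 P2 P3 P3 0 0 1, OF assms(1) _ this] show ?thesis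
      by simp
  qed
qed

section \<open>The deformation\<close>

definition const_eps :: "'a::zero poly \<Rightarrow> 'a poly poly" where
  "const_eps p = map_poly (\<lambda>c. [:c:]) p"

lemma coeff_const_eps [simp]: "coeff (const_eps p) i = [:coeff p i:]"
  unfolding const_eps_def by (simp add: coeff_map_poly)

lemma const_eps_mult [simp]: "const_eps (p * q) = const_eps p * const_eps q"
proof -
  have "(\<Sum>i\<in>A. [:f i:]) = [:sum f A:]" for f :: "nat \<Rightarrow> 'a" and A
    by (induction A rule: infinite_finite_induct) simp_all
  then show ?thesis by (simp add: poly_eq_iff coeff_mult mult.commute)
qed

definition eps_deform :: "'a::comm_semiring_1 poly \<Rightarrow> 'a poly \<Rightarrow> 'a poly poly" where
  "eps_deform p m = const_eps p + smult eps (const_eps m)"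

lemma coeff_eps_deform [simp]: "coeff (eps_deform p m) i = [:coeff p i, coeff m i:]"
  unfolding eps_deform_def eps_def by simp

lemma eps_deform_diff [simp]: "eps_deform p m - eps_deform p' m' = eps_deform (p - p') (m - m')"
  and eps_deform_add [simp]: "eps_deform p m + eps_deform p' m' = eps_deform (p + p') (m + m')"
  and smult_eps_deform [simp]: "smult [:y:] (eps_deform p m) = eps_deform (smult y p) (smult y m)"
  by (simp_all add: poly_eq_iff mult.commute)

lemma eps_deform_mult_const_eps [simp]:
  "eps_deform p m * const_eps x = eps_deform (p * x) (m * x)"
  unfolding eps_deform_def by (simp add: algebra_simps)

lemma eval_eps0_eps_deform [simp]: "eval_eps0 (eps_deform p m) = (p :: 'a::field poly)"
  by (simp add: poly_eq_iff coeff_eval_eps0)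

lemma degree_eps_deform: "degree (eps_deform p m) = max (degree p) (degree m)"
proof (rule antisym)
  show "degree (eps_deform p m) \<le> max (degree p) (degree m)"
    by (rule degree_le) (simp add: coeff_eq_0)
  show "max (degree p) (degree m) \<le> degree (eps_deform p m)"
  proof (cases "degree m \<le> degree p")
    case True
    show ?thesis
    proof (cases "p = 0")
      case False
      then have "coeff (eps_deform p m) (degree p) \<noteq> 0" by simp
      with True show ?thesis using le_degree by fastforce
    qed (use True in simp)
  next
    case False
    then have "coeff (eps_deform p m) (degree m) \<noteq> 0" by auto
    with False show ?thesis using le_degree by fastforce
  qed
qed

lemma deg3_eps_deform:
  "deg3 (eps_deform a x) (eps_deform b y) (eps_deform c z) = max (deg3 a b c) (deg3 x y z)"
  by (simp add: deg3_def degree_eps_deform ac_simps)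

lemma degree_monom_cross_le:
  fixes X Y :: "'a::comm_ring_1 poly"
  assumes "degree X \<le> m" "degree Y \<le> m"
  shows "degree (monom (coeff X m) (Suc k) * Y - monom (coeff Y m) (Suc k) * X) \<le> k + m"
proof (rule degree_le, intro allI impI)
  fix i assume i: "k + m < i"
  show "coeff (monom (coeff X m) (Suc k) * Y - monom (coeff Y m) (Suc k) * X) i = 0"
  proof (cases "i - Suc k = m")
    case False
    then have "m < i - Suc k" using i by simp
    then show ?thesis using i assms by (simp add: coeff_monom_mult coeff_eq_0)
  qed (use i in \<open>simp add: coeff_monom_mult\<close>)
qed

lemma deg3_eps_deform_monom:
  fixes p q r :: "'a::comm_semiring_1 poly"
  assumes "deg3 p q r \<le> mu" "(k1, k2, k3) \<noteq> (0, 0, 0)"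
  shows "deg3 (eps_deform p (monom k1 (Suc mu))) (eps_deform q (monom k2 (Suc mu)))
    (eps_deform r (monom k3 (Suc mu))) = Suc mu"
proof -
  have "degree (eps_deform x (monom k (Suc mu))) = (if k = 0 then degree x else Suc mu)"
    if "degree x \<le> mu" for x :: "'a poly" and k
    using that by (simp add: degree_eps_deform degree_monom_eq max_def)
  moreover have "degree p \<le> mu" "degree q \<le> mu" "degree r \<le> mu"
    using assms(1) by (simp_all add: deg3_def)
  ultimately show ?thesis using assms(2) by (auto simp: deg3_def)
qed

lemma gcd3_one_eps_deform_monom:
  fixes p q r :: "'a::field poly"
  assumes "gcd3_one p q r" "deg3 p q r \<le> mu"
    and "y1 * k1 + y2 * k2 + y3 * k3 = 0" "y1 * coeff p mu + y2 * coeff q mu + y3 * coeff r mu \<noteq> 0"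
  shows "gcd3_one (fract_poly (eps_deform p (monom k1 (Suc mu))))
    (fract_poly (eps_deform q (monom k2 (Suc mu)))) (fract_poly (eps_deform r (monom k3 (Suc mu))))"
proof -
  define u where "u = smult y1 p + smult y2 q + smult y3 r"
  \<comment> \<open>the combination \<open>y \<bullet> L\<^sub>\<epsilon>\<close> does not involve \<open>\<epsilon>\<close>\<close>
  have "smult y1 (monom k1 (Suc mu)) + smult y2 (monom k2 (Suc mu)) + smult y3 (monom k3 (Suc mu)) = 0"
    using assms(3) by (simp add: smult_monom add_monom)
  then have Q: "eps_deform u 0 = smult [:y1:] (eps_deform p (monom k1 (Suc mu)))
      + smult [:y2:] (eps_deform q (monom k2 (Suc mu))) + smult [:y3:] (eps_deform r (monom k3 (Suc mu)))"
    by (simp add: u_def)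
  have "coeff u mu = y1 * coeff p mu + y2 * coeff q mu + y3 * coeff r mu"
    by (simp add: u_def)
  then have "u \<noteq> 0" using assms(4) by auto
  then show ?thesis
    using assms(1) by (intro gcd3_one_fract_poly_of_specialization[OF _ Q]) (simp_all add: degree_eps_deform)
qed

lemma coprime_deformation:
  fixes p q r P Q R a b c :: "'a::field poly"
  assumes L: "gcd3_one p q r" "deg3 p q r = mu"
    and W: "deg3 P Q R \<le> m"
    and V: "q * R - r * Q = a" "r * P - p * R = b" "p * Q - q * P = c"
      "gcd3_one a b c" "deg3 a b c = mu + m"
  obtains Pe Qe Re Ae Be Ce :: "'a poly poly"
  where "(fract_poly Pe, fract_poly Qe, fract_poly Re) \<in> syz (fract_poly Ae) (fract_poly Be) (fract_poly Ce)"
    "gcd3_one (fract_poly Pe) (fract_poly Qe) (fract_poly Re)" "deg3 Pe Qe Re = Suc mu"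
    "gcd3_one (fract_poly Ae) (fract_poly Be) (fract_poly Ce)" "deg3 Ae Be Ce = mu + m"
    "eval_eps0 Ae = a" "eval_eps0 Be = b" "eval_eps0 Ce = c"
proof -
  define k1 k2 k3 where "k1 = coeff P m" "k2 = coeff Q m" "k3 = coeff R m"
  \<comment> \<open>\<open>L\<^sub>\<epsilon> = L + \<epsilon> t\<^sup>\<mu>\<^sup>+\<^sup>1 k\<close>; as \<open>k \<times> k = 0\<close>, the \<open>\<epsilon>\<close>-part of \<open>L\<^sub>\<epsilon> \<times> W\<close> has degree \<open>\<le> \<mu> + m\<close>\<close>
  define Pe Qe Re where "Pe = eps_deform p (monom k1 (Suc mu))"
    "Qe = eps_deform q (monom k2 (Suc mu))" "Re = eps_deform r (monom k3 (Suc mu))"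
  define Ae Be Ce where "Ae = Qe * const_eps R - Re * const_eps Q"
    "Be = Re * const_eps P - Pe * const_eps R" "Ce = Pe * const_eps Q - Qe * const_eps P"
  have dp: "degree p \<le> mu" "degree q \<le> mu" "degree r \<le> mu" using L(2) by (auto simp: deg3_def)
  have dP: "degree P \<le> m" "degree Q \<le> m" "degree R \<le> m" using W by (auto simp: deg3_def)
  have "coeff a (mu + m) = coeff q mu * k3 - coeff r mu * k2"
      "coeff b (mu + m) = coeff r mu * k1 - coeff p mu * k3"
      "coeff c (mu + m) = coeff p mu * k2 - coeff q mu * k1"
    unfolding k1_k2_k3_def using dp dP by (simp_all add: coeff_mult_degree_bound_sum flip: V(1-3))
  then have top_nz: "(coeff q mu * k3 - coeff r mu * k2, coeff r mu * k1 - coeff p mu * k3,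
      coeff p mu * k2 - coeff q mu * k1) \<noteq> (0, 0, 0)"
    using deg3_coeff_nonzero[OF gcd3_one_nonzero[OF V(4)]] V(5) by simp
  then obtain y1 y2 y3 where y: "y1 * k1 + y2 * k2 + y3 * k3 = 0"
      "y1 * coeff p mu + y2 * coeff q mu + y3 * coeff r mu \<noteq> 0"
    by (rule separating_functional_of_cross_nonzero)
  have "Pe * Ae + Qe * Be + Re * Ce = 0" unfolding Ae_Be_Ce_def by (simp add: algebra_simps)
  from arg_cong[OF this, of fract_poly]
  have "(fract_poly Pe, fract_poly Qe, fract_poly Re) \<in> syz (fract_poly Ae) (fract_poly Be) (fract_poly Ce)"
    by (simp add: syz_def)
  moreover have "gcd3_one (fract_poly Pe) (fract_poly Qe) (fract_poly Re)"
    unfolding Pe_Qe_Re_def using L y by (intro gcd3_one_eps_deform_monom) simp_all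
  moreover have "deg3 Pe Qe Re = Suc mu"
    unfolding Pe_Qe_Re_def using L(2) top_nz by (intro deg3_eps_deform_monom) auto
  moreover have Ve: "Ae = eps_deform a (monom k2 (Suc mu) * R - monom k3 (Suc mu) * Q)"
      "Be = eps_deform b (monom k3 (Suc mu) * P - monom k1 (Suc mu) * R)"
      "Ce = eps_deform c (monom k1 (Suc mu) * Q - monom k2 (Suc mu) * P)"
    unfolding Ae_Be_Ce_def Pe_Qe_Re_def by (simp_all flip: V(1-3))
  moreover have "deg3 Ae Be Ce = mu + m"
  proof -
    have "deg3 (monom k2 (Suc mu) * R - monom k3 (Suc mu) * Q) (monom k3 (Suc mu) * P - monom k1 (Suc mu) * R)
        (monom k1 (Suc mu) * Q - monom k2 (Suc mu) * P) \<le> mu + m"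
      using degree_monom_cross_le[OF dP(2,3), of mu] degree_monom_cross_le[OF dP(3,1), of mu]
        degree_monom_cross_le[OF dP(1,2), of mu]
      unfolding k1_k2_k3_def by (simp add: deg3_def)
    then show ?thesis unfolding Ve deg3_eps_deform using V(5) by simp
  qed
  moreover have "gcd3_one (fract_poly Ae) (fract_poly Be) (fract_poly Ce)"
    using V(4,5) \<open>deg3 Ae Be Ce = mu + m\<close>
    by (intro gcd3_one_fract_poly_of_deg3_specialization) (simp_all add: Ve)
  ultimately show ?thesis using that by (simp add: Ve)
qed

lemma to_Keps_eq_fract_poly: "to_Keps = fract_poly"
  unfolding to_Keps_def to_fract_def by (rule ext) simp

theorem theorem1p2:
  fixes a b c :: "'a::alg_closed_field poly" and n mu :: nat
  assumes "n \<ge> 1" and "mu < n div 2" and "(a, b, c) \<in> Pmu mu n"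
  shows "\<exists>ae be ce :: 'a poly poly.
           gcd3_one (to_Keps ae) (to_Keps be) (to_Keps ce) \<and>
           deg3 (to_Keps ae) (to_Keps be) (to_Keps ce) = n \<and>
           syz_class (to_Keps ae) (to_Keps be) (to_Keps ce) = syz_class a b c + 1 \<and>
           eval_eps0 ae = a \<and> eval_eps0 be = b \<and> eval_eps0 ce = c"
proof -
  from assms(3) have V: "gcd3_one a b c" "deg3 a b c = n" and mu: "syz_class a b c = mu"
    unfolding Pmu_def Pn_def by auto
  have n: "2 * Suc mu \<le> n" using assms(2) by presburger
  obtain p q r where L: "(p, q, r) \<in> syz a b c" "(p, q, r) \<noteq> (0, 0, 0)" "deg3 p q r = mu"
    by (rule syz_class_attained[of a b c, unfolded mu])
  then have "gcd3_one p q r" using gcd3_one_minimal_syzygy[OF L(1,2)] mu by simp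
  have "deg3 a b c \<le> n" "2 * mu \<le> n" using V(2) n by simp_all
  then obtain P Q R where
    W: "q * R - r * Q = a" "r * P - p * R = b" "p * Q - q * P = c" "deg3 P Q R \<le> n - mu"
    by (rule syzygy_cross_factor_low_degree[OF L(1) \<open>gcd3_one p q r\<close> L(3)])
  have dV: "deg3 a b c = mu + (n - mu)" using V(2) n by simp
  obtain Pe Qe Re Ae Be Ce where
    "(fract_poly Pe, fract_poly Qe, fract_poly Re) \<in> syz (fract_poly Ae) (fract_poly Be) (fract_poly Ce)"
    "gcd3_one (fract_poly Pe) (fract_poly Qe) (fract_poly Re)" "deg3 Pe Qe Re = Suc mu"
    and Ve: "gcd3_one (fract_poly Ae) (fract_poly Be) (fract_poly Ce)" "deg3 Ae Be Ce = mu + (n - mu)"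
      "eval_eps0 Ae = a" "eval_eps0 Be = b" "eval_eps0 Ce = c"
    by (rule coprime_deformation[OF \<open>gcd3_one p q r\<close> L(3) W(4) W(1-3) V(1) dV])
  then have "syz_class (fract_poly Ae) (fract_poly Be) (fract_poly Ce) = Suc mu"
    using n by (subst syz_class_coprime_syzygy) auto
  with Ve mu n show ?thesis unfolding to_Keps_eq_fract_poly by auto
qed

end
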